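(* Let $\beta>0$, $\sigma^2>0$ and $snr=\sigma^{-2}$. Let $P_X$ be a distribution on a constellation $\mathcal{S}\subset\mathbb{C}$ with finite second moment, and let $\omega_{\mathcal S}(\rho)$ be its scalar MMSE function (defined below). Define $\phi(v)=(\beta v+\sigma^2)^{-1}$ for $v\ge 0$, whose inverse is $\phi^{-1}(\rho)=\beta^{-1}(1/\rho-\sigma^2)$ for $0<\rho\le snr$. Assume (single fixed point) that the equation $\omega_{\mathcal S}(\rho)=\phi^{-1}(\rho)$ has exactly one solution $\rho^*>0$; equivalently, with $\zeta^*=snr/\rho^*-1$, $\zeta^*$ is the unique positive solution of $\zeta=\beta\cdot snr\cdot\omega_{\mathcal S}\big(snr/(1+\zeta)\big)$. Let $$C=\beta^{-1}\Big[\log(1+\zeta^* )-\frac{\zeta^*}{1+\zeta^*}\Big]+C_{\rm SISO}\Big(\frac{snr}{1+\zeta^*}\Big),$$ which is the constrained capacity (per signal dimension) of the large random matrix system described below. Define $\omega^*_{\mathcal C}(\rho)=\min\{\omega_{\mathcal S}(\rho),\phi^{-1}(\rho)\}$ for $0<\rho\le snr$. Then $$C=A_{\omega^*_{\mathcal C}}:=\int_0^{snr}\omega^*_{\mathcal C}(\rho)\,d\rho=\beta^{-1}\Big[\frac{\rho^*}{snr}-\log\frac{\rho^*}{snr}-1\Big]+\int_0^{\rho^*}\omega_{\mathcal S}(\rho)\,d\rho .$$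
   Context: Scalar channel: $y=\sqrt{\rho}\,x+z$ with $z\sim\mathcal{CN}(0,1)$ independent of $x\sim P_X$; $\omega_{\mathcal S}(\rho)=\mathrm{mmse}(x\mid \sqrt{\rho}x+z)=\mathrm{E}|x-\mathrm{E}[x\mid y]|^2$, a continuous nonincreasing function of $\rho\ge0$. $C_{\rm SISO}(\rho^* )=I(x;\sqrt{\rho^*}x+z)=\int_0^{\rho^*}\omega_{\mathcal S}(\rho)\,d\rho$ (I-MMSE relation). The large random matrix system is $\mathbf y=\mathbf A\mathbf x+\mathbf n$ with $\mathbf A\in\mathbb C^{M\times N}$ having IID $\mathcal{CN}(0,1/M)$ entries, $\mathbf x$ having IID entries $\sim P_X$, $\mathbf n\sim\mathcal{CN}(0,\sigma^2 I_M)$, in the limit $M,N\to\infty$ with $\beta=N/M$ fixed; $snr=\sigma^{-2}$. *)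

theory Defs
  imports "HOL-Analysis.Analysis"
begin

text \<open>Inverse of phi(v) = 1/(beta v + sigma^2), for 0 < rho <= snr.\<close>
definition phi_inv :: "real \<Rightarrow> real \<Rightarrow> real \<Rightarrow> real" where
  "phi_inv \<beta> \<sigma>2 \<rho> = (1 / \<rho> - \<sigma>2) / \<beta>"

text \<open>Scalar constrained capacity via the I-MMSE relation: C_SISO(r) = int_0^r omega.\<close>
definition C_SISO :: "(real \<Rightarrow> real) \<Rightarrow> real \<Rightarrow> real" where
  "C_SISO \<omega> r = integral {0..r} \<omega>"

definition omega_C :: "(real \<Rightarrow> real) \<Rightarrow> real \<Rightarrow> real \<Rightarrow> real \<Rightarrow> real" where
  "omega_C \<omega> \<beta> \<sigma>2 \<rho> = min (\<omega> \<rho>) (phi_inv \<beta> \<sigma>2 \<rho>)"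

end

theory Submission
  imports Defs
begin

text \<open>The MMSE curve \<omega> and the curve \<phi>\<inverse>(\<rho>) = (1/\<rho> - \<sigma>2)/\<beta> cross exactly once, at \<rho>*:
  \<omega> - \<phi>\<inverse> is continuous on (0, snr], negative near 0 (where \<phi>\<inverse> blows up while \<omega> stays
  below \<omega>(0)) and nonnegative at snr (where \<phi>\<inverse> vanishes), so by the intermediate value
  theorem it has a constant sign on either side of its only zero. Hence the minimum of the two
  curves is \<omega> on (0, \<rho>*] and \<phi>\<inverse> on [\<rho>*, snr]; the second piece integrates in closed
  form, and the capacity formula is the same quantity written in terms of \<zeta>* = snr/\<rho>* - 1.\<close>

lemma nonpos_left_of_unique_zero:
  fixes g :: "real \<Rightarrow> real"
  assumes cont: "continuous_on {a..c} g" and "g a \<le> 0" "g c = 0"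
    and unique: "\<And>y. a \<le> y \<Longrightarrow> y \<le> c \<Longrightarrow> g y = 0 \<Longrightarrow> y = c"
    and x: "a \<le> x" "x \<le> c"
  shows "g x \<le> 0"
proof (rule ccontr)
  assume pos: "\<not> g x \<le> 0"
  have "x < c"
    using pos x \<open>g c = 0\<close> by (cases "x = c") auto
  obtain y where "a \<le> y" "y \<le> x" "g y = 0"
    using IVT'[of g a 0 x] pos \<open>g a \<le> 0\<close> x continuous_on_subset[OF cont] by auto
  with unique[of y] \<open>x < c\<close> show False by auto
qed

lemma nonneg_right_of_unique_zero:
  fixes g :: "real \<Rightarrow> real"
  assumes cont: "continuous_on {c..b} g" and "0 \<le> g b" "g c = 0"
    and unique: "\<And>y. c \<le> y \<Longrightarrow> y \<le> b \<Longrightarrow> g y = 0 \<Longrightarrow> y = c"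
    and x: "c \<le> x" "x \<le> b"
  shows "0 \<le> g x"
proof (rule ccontr)
  assume neg: "\<not> 0 \<le> g x"
  have "c < x"
    using neg x \<open>g c = 0\<close> by (cases "x = c") auto
  obtain y where "x \<le> y" "y \<le> b" "g y = 0"
    using IVT'[of g x 0 b] neg \<open>0 \<le> g b\<close> x continuous_on_subset[OF cont] by auto
  with unique[of y] \<open>c < x\<close> show False by auto
qed

lemma has_integral_min_crossing:
  fixes f g :: "real \<Rightarrow> real"
  assumes "a \<le> c" "c \<le> b"
    and below: "\<And>x. a < x \<Longrightarrow> x \<le> c \<Longrightarrow> f x \<le> g x"
    and above: "\<And>x. c \<le> x \<Longrightarrow> x \<le> b \<Longrightarrow> g x \<le> f x"
    and "f integrable_on {a..c}" "(g has_integral I) {c..b}"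
  shows "((\<lambda>x. min (f x) (g x)) has_integral integral {a..c} f + I) {a..b}"
proof (rule has_integral_combine[OF assms(1,2)])
  show "((\<lambda>x. min (f x) (g x)) has_integral integral {a..c} f) {a..c}"
    by (rule has_integral_spike_finite[where S = "{a}" and f = f])
      (use below integrable_integral[OF assms(5)] in \<open>auto simp: min_def\<close>)
  show "((\<lambda>x. min (f x) (g x)) has_integral I) {c..b}"
    by (rule has_integral_spike_finite[where S = "{}" and f = g]) (use above assms(6) in auto)
qed

lemma continuous_on_phi_inv:
  assumes "0 < a"
  shows "continuous_on {a..b} (phi_inv \<beta> \<sigma>2)"
proof -
  have "phi_inv \<beta> \<sigma>2 = (\<lambda>\<rho>. (1 / \<rho> - \<sigma>2) * inverse \<beta>)"
    by (simp add: fun_eq_iff phi_inv_def divide_inverse_commute)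
  then show ?thesis
    using assms by (auto intro!: continuous_intros)
qed

lemma phi_inv_ge:
  assumes "0 < \<beta>" "0 < \<beta> * M + \<sigma>2" "0 < \<rho>" "\<rho> \<le> 1 / (\<beta> * M + \<sigma>2)"
  shows "M \<le> phi_inv \<beta> \<sigma>2 \<rho>"
proof -
  have "\<beta> * M \<le> 1 / \<rho> - \<sigma>2"
    using assms(2-4) by (simp add: field_simps)
  then show ?thesis
    using assms(1) by (simp add: phi_inv_def pos_le_divide_eq mult.commute)
qed

lemma phi_inv_has_integral:
  assumes "0 < a" "a \<le> b"
  shows "(phi_inv \<beta> \<sigma>2 has_integral (ln (b / a) - \<sigma>2 * (b - a)) / \<beta>) {a..b}"
proof -
  define F where "F x = (ln x - \<sigma>2 * x) * inverse \<beta>" for x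
  have "(phi_inv \<beta> \<sigma>2 has_integral F b - F a) {a..b}"
  proof (rule fundamental_theorem_of_calculus[OF assms(2)])
    fix x assume "x \<in> {a..b}"
    then have "0 < x" using assms(1) by auto
    then have "(F has_real_derivative (1 / x - \<sigma>2) * inverse \<beta>) (at x)"
      unfolding F_def by (auto intro!: derivative_eq_intros)
    then have "(F has_real_derivative phi_inv \<beta> \<sigma>2 x) (at x within {a..b})"
      by (simp add: phi_inv_def divide_inverse has_field_derivative_at_within)
    then show "(F has_vector_derivative phi_inv \<beta> \<sigma>2 x) (at x within {a..b})"
      by (simp add: has_real_derivative_iff_has_vector_derivative)
  qed
  moreover have "F b - F a = (ln (b / a) - \<sigma>2 * (b - a)) / \<beta>"
  proof -
    have "ln (b / a) = ln b - ln a"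
      using assms by (simp add: ln_div)
    then show ?thesis
      unfolding F_def divide_inverse by (simp only:) (simp add: algebra_simps)
  qed
  ultimately show ?thesis by simp
qed

lemma phi_inv_has_integral_up_to_snr:
  assumes "0 < \<sigma>2" "snr = 1 / \<sigma>2" "0 < \<rho>" "\<rho> \<le> snr"
  shows "(phi_inv \<beta> \<sigma>2 has_integral (1 / \<beta>) * (\<rho> / snr - ln (\<rho> / snr) - 1)) {\<rho>..snr}"
proof -
  have "\<sigma>2 * (snr - \<rho>) = 1 - \<rho> / snr"
    using assms(1,2) by (simp add: right_diff_distrib)
  moreover have "ln (snr / \<rho>) = - ln (\<rho> / snr)"
    using assms by (simp add: ln_div)
  ultimately have closed_form:
      "(ln (snr / \<rho>) - \<sigma>2 * (snr - \<rho>)) / \<beta> = (1 / \<beta>) * (\<rho> / snr - ln (\<rho> / snr) - 1)"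
    by simp
  show ?thesis
    using phi_inv_has_integral[of \<rho> snr \<beta> \<sigma>2, OF assms(3,4)]
    unfolding closed_form .
qed

lemma mmse_le_phi_inv_below_fixed_point:
  fixes \<omega> :: "real \<Rightarrow> real"
  assumes "0 < \<beta>" "0 < \<sigma>2"
    and cont: "continuous_on {0..} \<omega>"
    and mono: "\<And>a b. 0 \<le> a \<Longrightarrow> a \<le> b \<Longrightarrow> \<omega> b \<le> \<omega> a"
    and "0 \<le> \<omega> 0"
    and fixed: "\<omega> \<rho>s = phi_inv \<beta> \<sigma>2 \<rho>s"
    and unique: "\<And>\<rho>. 0 < \<rho> \<Longrightarrow> \<rho> \<le> \<rho>s \<Longrightarrow> \<omega> \<rho> = phi_inv \<beta> \<sigma>2 \<rho> \<Longrightarrow> \<rho> = \<rho>s"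
    and "0 < \<rho>" "\<rho> \<le> \<rho>s"
  shows "\<omega> \<rho> \<le> phi_inv \<beta> \<sigma>2 \<rho>"
proof -
  define g where "g x = \<omega> x - phi_inv \<beta> \<sigma>2 x" for x
  have M_pos: "0 < \<beta> * \<omega> 0 + \<sigma>2"
    using assms(1,2,5) by (simp add: add_nonneg_pos)
  define \<epsilon> where "\<epsilon> = min \<rho> (1 / (\<beta> * \<omega> 0 + \<sigma>2))"
  have \<epsilon>: "0 < \<epsilon>" "\<epsilon> \<le> \<rho>"
    using \<open>0 < \<rho>\<close> M_pos by (auto simp: \<epsilon>_def)
  have "\<omega> \<epsilon> \<le> \<omega> 0"
    using mono \<epsilon> by simp
  also have "\<omega> 0 \<le> phi_inv \<beta> \<sigma>2 \<epsilon>"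
    using phi_inv_ge[OF assms(1) M_pos \<epsilon>(1)] by (simp add: \<epsilon>_def)
  finally have g_eps: "g \<epsilon> \<le> 0"
    by (simp add: g_def)
  have g_cont: "continuous_on {\<epsilon>..\<rho>s} g"
    unfolding g_def using \<epsilon>(1)
    by (intro continuous_intros continuous_on_phi_inv continuous_on_subset[OF cont]) auto
  have g_zero: "g \<rho>s = 0"
    using fixed by (simp add: g_def)
  have g_unique: "y = \<rho>s" if "\<epsilon> \<le> y" "y \<le> \<rho>s" "g y = 0" for y
    using that \<epsilon>(1) by (intro unique) (auto simp: g_def)
  have "g \<rho> \<le> 0"
    using g_cont g_eps g_zero g_unique \<epsilon>(2) \<open>\<rho> \<le> \<rho>s\<close> by (rule nonpos_left_of_unique_zero)
  then show ?thesis
    by (simp add: g_def)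
qed

lemma phi_inv_le_mmse_above_fixed_point:
  fixes \<omega> :: "real \<Rightarrow> real"
  assumes "0 < \<sigma>2"
    and cont: "continuous_on {0..} \<omega>"
    and "0 \<le> \<omega> (1 / \<sigma>2)"
    and "0 < \<rho>s" and fixed: "\<omega> \<rho>s = phi_inv \<beta> \<sigma>2 \<rho>s"
    and unique: "\<And>\<rho>. \<rho>s \<le> \<rho> \<Longrightarrow> \<rho> \<le> 1 / \<sigma>2 \<Longrightarrow> \<omega> \<rho> = phi_inv \<beta> \<sigma>2 \<rho> \<Longrightarrow> \<rho> = \<rho>s"
    and "\<rho>s \<le> \<rho>" "\<rho> \<le> 1 / \<sigma>2"
  shows "phi_inv \<beta> \<sigma>2 \<rho> \<le> \<omega> \<rho>"
proof -
  define g where "g x = \<omega> x - phi_inv \<beta> \<sigma>2 x" for x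
  have g_snr: "0 \<le> g (1 / \<sigma>2)"
    using assms(1,3) by (simp add: g_def phi_inv_def)
  have g_cont: "continuous_on {\<rho>s..1 / \<sigma>2} g"
    unfolding g_def using \<open>0 < \<rho>s\<close>
    by (intro continuous_intros continuous_on_phi_inv continuous_on_subset[OF cont]) auto
  have g_zero: "g \<rho>s = 0"
    using fixed by (simp add: g_def)
  have g_unique: "y = \<rho>s" if "\<rho>s \<le> y" "y \<le> 1 / \<sigma>2" "g y = 0" for y
    using that by (intro unique) (auto simp: g_def)
  have "0 \<le> g \<rho>"
    using g_cont g_snr g_zero g_unique assms(7,8) by (rule nonneg_right_of_unique_zero)
  then show ?thesis
    by (simp add: g_def)
qed

lemma capacity_eq_fixed_point_form:
  assumes "0 < \<rho>s" "0 < snr" "\<zeta>s = snr / \<rho>s - 1"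
  shows "(1 / \<beta>) * (ln (1 + \<zeta>s) - \<zeta>s / (1 + \<zeta>s)) + C_SISO \<omega> (snr / (1 + \<zeta>s))
      = (1 / \<beta>) * (\<rho>s / snr - ln (\<rho>s / snr) - 1) + integral {0..\<rho>s} \<omega>"
proof -
  have one_plus: "1 + \<zeta>s = snr / \<rho>s"
    using assms(3) by simp
  have bound: "snr / (1 + \<zeta>s) = \<rho>s"
    using assms(1,2) by (simp add: one_plus)
  have ratio: "\<zeta>s / (1 + \<zeta>s) = 1 - \<rho>s / snr"
    unfolding one_plus assms(3) using assms(1,2) by (simp add: field_simps)
  have log: "ln (1 + \<zeta>s) = - ln (\<rho>s / snr)"
    unfolding one_plus using assms(1,2) by (simp add: ln_div)
  show ?thesis
    unfolding C_SISO_def bound ratio log by simp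
qed

theorem proposition1:
  fixes \<beta> \<sigma>2 snr \<rho>s \<zeta>s :: real and \<omega> :: "real \<Rightarrow> real"
  assumes beta_pos: "\<beta> > 0"
    and sigma_pos: "\<sigma>2 > 0"
    and snr_def: "snr = 1 / \<sigma>2"
    and omega_cont: "continuous_on {0..} \<omega>"
    and omega_mono: "\<And>a b. 0 \<le> a \<Longrightarrow> a \<le> b \<Longrightarrow> \<omega> b \<le> \<omega> a"
    and omega_nonneg: "\<And>\<rho>. 0 \<le> \<rho> \<Longrightarrow> 0 \<le> \<omega> \<rho>"
    and rho_range: "0 < \<rho>s" "\<rho>s \<le> snr"
    and rho_fix: "\<omega> \<rho>s = phi_inv \<beta> \<sigma>2 \<rho>s"
    and rho_unique: "\<And>\<rho>. 0 < \<rho> \<Longrightarrow> \<rho> \<le> snr \<Longrightarrow> \<omega> \<rho> = phi_inv \<beta> \<sigma>2 \<rho> \<Longrightarrow> \<rho> = \<rho>s"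
    and zeta_def: "\<zeta>s = snr / \<rho>s - 1"
  shows "omega_C \<omega> \<beta> \<sigma>2 integrable_on {0..snr}
     \<and> (1 / \<beta>) * (ln (1 + \<zeta>s) - \<zeta>s / (1 + \<zeta>s)) + C_SISO \<omega> (snr / (1 + \<zeta>s))
         = integral {0..snr} (omega_C \<omega> \<beta> \<sigma>2)
     \<and> integral {0..snr} (omega_C \<omega> \<beta> \<sigma>2)
         = (1 / \<beta>) * (\<rho>s / snr - ln (\<rho>s / snr) - 1) + integral {0..\<rho>s} \<omega>"
proof -
  have snr_pos: "0 < snr"
    using snr_def sigma_pos by simp
  have unique_below: "\<rho> = \<rho>s"
    if "0 < \<rho>" "\<rho> \<le> \<rho>s" "\<omega> \<rho> = phi_inv \<beta> \<sigma>2 \<rho>" for \<rho>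
    using that rho_range(2) by (intro rho_unique) auto
  have unique_above: "\<rho> = \<rho>s"
    if "\<rho>s \<le> \<rho>" "\<rho> \<le> 1 / \<sigma>2" "\<omega> \<rho> = phi_inv \<beta> \<sigma>2 \<rho>" for \<rho>
    using that rho_range(1) snr_def by (intro rho_unique) auto
  have below: "\<omega> \<rho> \<le> phi_inv \<beta> \<sigma>2 \<rho>" if "0 < \<rho>" "\<rho> \<le> \<rho>s" for \<rho>
    by (rule mmse_le_phi_inv_below_fixed_point[OF beta_pos sigma_pos omega_cont omega_mono
          omega_nonneg[OF order_refl] rho_fix unique_below that])
  have nonneg_at_snr: "0 \<le> \<omega> (1 / \<sigma>2)"
    using omega_nonneg sigma_pos by simp
  have above: "phi_inv \<beta> \<sigma>2 \<rho> \<le> \<omega> \<rho>" if "\<rho>s \<le> \<rho>" "\<rho> \<le> snr" for \<rho>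
    by (rule phi_inv_le_mmse_above_fixed_point[OF sigma_pos omega_cont nonneg_at_snr rho_range(1)
          rho_fix unique_above that(1) that(2)[unfolded snr_def]])
  have "\<omega> integrable_on {0..\<rho>s}"
    by (intro integrable_continuous_interval continuous_on_subset[OF omega_cont]) auto
  from has_integral_min_crossing[OF less_imp_le[OF rho_range(1)] rho_range(2) below above this
      phi_inv_has_integral_up_to_snr[OF sigma_pos snr_def rho_range]]
  have area: "(omega_C \<omega> \<beta> \<sigma>2 has_integral
      (1 / \<beta>) * (\<rho>s / snr - ln (\<rho>s / snr) - 1) + integral {0..\<rho>s} \<omega>) {0..snr}"
    by (simp add: omega_C_def[abs_def] add.commute)
  show ?thesis
    using has_integral_integrable[OF area] integral_unique[OF area]
      capacity_eq_fixed_point_form[OF rho_range(1) snr_pos zeta_def]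
    by simp
qed

end
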